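(* Let $n\ge 2$, let $\sigma,\tau\in S_n$ with ${\rm hd}(\sigma,\tau)=d$, and let $m\in\{1,\ldots,n-1\}$. Assume that the disjoint cycle decomposition of $\sigma^{-1}\tau$ has no cycle factor of odd length $\ell$ with $3\le \ell\le 2m+1$. Then ${\rm hd}\big(\sigma^{{\sf CT}^m},\tau^{{\sf CT}^m}\big)\ge d-2m$.
   Context: $S_n$ is the symmetric group on the symbols $\{0,1,\ldots,n-1\}$. Permutations are composed from left to right: for $\sigma,\tau\in S_n$, $\tau\sigma(x):=\sigma(\tau(x))$; in particular $\sigma^{-1}\tau(x)=\tau(\sigma^{-1}(x))$. The Hamming distance of $\sigma,\tau\in S_n$ is ${\rm hd}(\sigma,\tau)=|\{x\in\{0,\ldots,n-1\}:\sigma(x)\neq\tau(x)\}|$. The contraction of $\sigma\in S_n$ is the permutation $\sigma^{\sf CT}\in S_{n-1}$ (on $\{0,\ldots,n-2\}$) defined by $\sigma^{\sf CT}(x)=\sigma(n-1)$ if $x=\sigma^{-1}(n-1)$ and $\sigma^{\sf CT}(x)=\sigma(x)$ otherwise; equivalently, $\sigma^{\sf CT}$ is obtained by deleting the symbol $n-1$ from the disjoint cycle notation of $\sigma$. For $1\le m\le n-1$, the $m$th contraction is defined recursively by $\sigma^{{\sf CT}^1}=\sigma^{\sf CT}$ and $\sigma^{{\sf CT}^m}=(\sigma^{{\sf CT}^{m-1}})^{\sf CT}\in S_{n-m}$ (each contraction removes the currently largest symbol). *)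

theory Defs
  imports "HOL-Combinatorics.Combinatorics"
begin

text \<open>Permutations of S_n are functions nat => nat with "p permutes {..<n}".
  Composition is left to right: sigma^{-1} tau (x) = tau (sigma^{-1} x), i.e. tau o inv sigma.\<close>

definition hamming :: "nat \<Rightarrow> (nat \<Rightarrow> nat) \<Rightarrow> (nat \<Rightarrow> nat) \<Rightarrow> nat" where
  "hamming n \<sigma> \<tau> = card {x. x < n \<and> \<sigma> x \<noteq> \<tau> x}"

definition contract :: "nat \<Rightarrow> (nat \<Rightarrow> nat) \<Rightarrow> (nat \<Rightarrow> nat)" where
  "contract n \<sigma> = (\<lambda>x. if x < n - 1 then
       (if x = inv \<sigma> (n - 1) then \<sigma> (n - 1) else \<sigma> x) else x)"

fun contract_iter :: "nat \<Rightarrow> nat \<Rightarrow> (nat \<Rightarrow> nat) \<Rightarrow> (nat \<Rightarrow> nat)" where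
  "contract_iter n 0 \<sigma> = \<sigma>"
| "contract_iter n (Suc m) \<sigma> = contract (n - m) (contract_iter n m \<sigma>)"

end

theory Submission
  imports Defs
begin

(* Contracting m times restricts \<sigma> and \<tau> to the permutations they induce on {..<k},
   k = n - m, by first return. A position x < k where the induced permutations agree
   either agreed before or is a new agreement: \<sigma> x \<noteq> \<tau> x, but the excursions of \<sigma> and
   of \<tau> from x through the removed symbols return to the same point. For every removed
   symbol y join the points where its \<sigma>-excursion and its \<tau>-excursion start, doubling
   the edge when \<sigma> y = \<tau> y. If there were more new agreements than edges, this multigraph
   would have a tree component W. The symbols on \<sigma>-excursions starting in W then form a
   set on which \<sigma>\<^sup>-\<^sup>1\<tau> acts with an odd number, at most 2m + 1, of moved points, hence with
   an odd cycle of length between 3 and 2m + 1. So there are at most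
   m + #{y \<ge> k. \<sigma> y = \<tau> y} new agreements, and the Hamming distance drops by at most 2m. *)

section \<open>First returns and induced permutations\<close>

(* The junk value k signals that the forward orbit of x never enters {..<k}. *)
definition first_return :: "nat \<Rightarrow> (nat \<Rightarrow> nat) \<Rightarrow> nat \<Rightarrow> nat" where
  "first_return k f x =
     (if \<exists>j>0. (f ^^ j) x < k then (f ^^ (LEAST j. 0 < j \<and> (f ^^ j) x < k)) x else k)"

lemma first_return_less_iff: "first_return k f x < k \<longleftrightarrow> (\<exists>j>0. (f ^^ j) x < k)"
  unfolding first_return_def by (auto intro: LeastI2_wellorder)

lemma first_return_of_less: "f x < k \<Longrightarrow> first_return k f x = f x"
proof -
  assume "f x < k"
  then have "(LEAST j. 0 < j \<and> (f ^^ j) x < k) = 1"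
    by (intro Least_equality) auto
  with \<open>f x < k\<close> show ?thesis
    unfolding first_return_def by (auto intro: exI[of _ 1])
qed

lemma first_return_step:
  assumes "k \<le> f x"
  shows "first_return k f x = first_return k f (f x)"
proof -
  have shift: "(0 < Suc j \<and> (f ^^ Suc j) x < k) \<longleftrightarrow> (0 < j \<and> (f ^^ j) (f x) < k)" for j
    using assms by (cases j) (auto simp: funpow_Suc_right simp del: funpow.simps)
  have ex: "(\<exists>j>0. (f ^^ j) x < k) \<longleftrightarrow> (\<exists>j>0. (f ^^ j) (f x) < k)"
    by (metis shift gr0_implies_Suc zero_less_Suc)
  show ?thesis
  proof (cases "\<exists>j>0. (f ^^ j) x < k")
    case True
    then obtain j where "0 < j" "(f ^^ j) x < k"
      by blast
    then have "(LEAST j. 0 < j \<and> (f ^^ j) x < k) = Suc (LEAST j. 0 < Suc j \<and> (f ^^ Suc j) x < k)"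
      by (rule Least_Suc[OF conjI]) simp
    also have "\<dots> = Suc (LEAST j. 0 < j \<and> (f ^^ j) (f x) < k)"
      by (simp only: shift)
    finally show ?thesis
      using True ex unfolding first_return_def by (simp add: funpow_Suc_right del: funpow.simps)
  next
    case False
    with ex show ?thesis
      unfolding first_return_def by (simp only: if_False)
  qed
qed

lemma first_return_induct [consumes 1, case_names return step]:
  assumes "first_return k f x < k"
    and return: "\<And>x. f x < k \<Longrightarrow> P x"
    and step: "\<And>x. k \<le> f x \<Longrightarrow> first_return k f (f x) < k \<Longrightarrow> P (f x) \<Longrightarrow> P x"
  shows "P x"
proof -
  obtain j where "0 < j" "(f ^^ j) x < k"
    using assms(1) first_return_less_iff by blast
  then show ?thesis
  proof (induction j arbitrary: x)
    case (Suc j)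
    show ?case
    proof (cases "f x < k")
      case False
      with Suc.prems have "0 < j" "(f ^^ j) (f x) < k"
        by (auto simp: funpow_Suc_right simp del: funpow.simps intro: Nat.gr0I)
      with False show ?thesis
        using Suc.IH step first_return_less_iff by (meson not_less)
    qed (rule return)
  qed simp
qed

lemma first_return_less:
  assumes "permutation f" "x < k"
  shows "first_return k f x < k"
proof -
  obtain N where "(f ^^ N) = id" "0 < N"
    using assms(1) by (rule permutation_is_nilpotent)
  with assms(2) show ?thesis
    unfolding first_return_less_iff by (metis id_apply)
qed

(* For y \<ge> k, the point of {..<k} from which the excursion of f through y started. *)
definition last_below :: "nat \<Rightarrow> (nat \<Rightarrow> nat) \<Rightarrow> nat \<Rightarrow> nat" where
  "last_below k f y = first_return k (inv f) (f y)"

context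
  fixes f :: "nat \<Rightarrow> nat"
  assumes perm: "permutation f"
begin

declare inv_f_f[OF bij_is_inj[OF permutation_bijective[OF perm]], simp]
  surj_f_inv_f[OF bij_is_surj[OF permutation_bijective[OF perm]], simp]

lemma last_below_of_less: "y < k \<Longrightarrow> last_below k f y = y"
  unfolding last_below_def by (simp add: first_return_of_less)

lemma last_below_step: "k \<le> f y \<Longrightarrow> last_below k f (f y) = last_below k f y"
  unfolding last_below_def using first_return_step[of k "inv f" "f (f y)"] by simp

lemma first_return_inv_first_return:
  assumes "first_return k f x < k"
  shows "first_return k (inv f) (first_return k f x) = last_below k f x"
  using assms
proof (induction x rule: first_return_induct)
  case (return x)
  then show ?case
    by (simp add: first_return_of_less last_below_def)
next
  case (step x)
  then show ?case
    by (metis first_return_step last_below_step)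
qed

lemma last_below_inv_first_return:
  assumes "x < k"
  shows "last_below k f (inv f (first_return k f x)) = x"
  using first_return_inv_first_return[OF first_return_less[OF perm assms]] last_below_of_less[OF assms]
  by (simp add: last_below_def)

end

lemma first_return_last_below:
  assumes "permutation f" "f y < k"
  shows "first_return k f (last_below k f y) = f y"
proof -
  have perm_inv: "permutation (inv f)" and inv_inv: "inv (inv f) = f"
    using assms(1) by (simp_all add: permutation_inverse permutation_bijective inv_inv_eq)
  have "first_return k (inv f) (f y) < k"
    using first_return_less[OF perm_inv assms(2)] .
  then have "first_return k f (first_return k (inv f) (f y)) = first_return k f (inv f (f y))"
    using first_return_inv_first_return[OF perm_inv] by (simp add: inv_inv last_below_def)
  then show ?thesis
    using assms by (simp add: last_below_def first_return_of_less)
qed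

lemma first_return_inj_on:
  assumes "permutation f"
  shows "inj_on (first_return k f) {..<k}"
proof (rule inj_on_inverseI)
  fix x assume "x \<in> {..<k}"
  with assms show "first_return k (inv f) (first_return k f x) = x"
    by (simp add: first_return_inv_first_return first_return_less last_below_of_less)
qed

lemma first_return_pred_below:
  assumes "first_return k f x < k - 1"
  shows "first_return (k - 1) f x = first_return k f x"
proof -
  have "first_return k f x < k"
    using assms by simp
  then show ?thesis
    using assms
  proof (induction x rule: first_return_induct)
    case (return x)
    then show ?case
      by (simp add: first_return_of_less)
  next
    case (step x)
    then show ?case
      using first_return_step[of k f x] first_return_step[of "k - 1" f x] by simp
  qed
qed

lemma first_return_pred_top:
  assumes "first_return k f x = k - 1" "0 < k"
  shows "first_return (k - 1) f x = first_return (k - 1) f (k - 1)"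
proof -
  have "first_return k f x < k"
    using assms by simp
  then show ?thesis
    using assms
  proof (induction x rule: first_return_induct)
    case (return x)
    then show ?case
      using first_return_step[of "k - 1" f x] by (simp add: first_return_of_less)
  next
    case (step x)
    then show ?case
      using first_return_step[of k f x] first_return_step[of "k - 1" f x] by simp
  qed
qed

definition induced_perm :: "nat \<Rightarrow> (nat \<Rightarrow> nat) \<Rightarrow> nat \<Rightarrow> nat" where
  "induced_perm k f x = (if x < k then first_return k f x else x)"

lemma induced_perm_permutes:
  assumes "permutation f"
  shows "induced_perm k f permutes {..<k}"
proof (rule bij_imp_permutes)
  have "inj_on (induced_perm k f) {..<k}"
    using first_return_inj_on[OF assms] by (simp add: inj_on_def induced_perm_def)
  moreover have "induced_perm k f ` {..<k} \<subseteq> {..<k}"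
    using first_return_less[OF assms] by (auto simp: induced_perm_def)
  ultimately show "bij_betw (induced_perm k f) {..<k} {..<k}"
    by (simp add: bij_betw_def endo_inj_surj)
qed (simp add: induced_perm_def)

lemma contract_induced_perm:
  assumes "permutation f"
  shows "contract k (induced_perm k f) = induced_perm (k - 1) f"
proof
  fix x
  show "contract k (induced_perm k f) x = induced_perm (k - 1) f x"
  proof (cases "x < k - 1")
    case True
    have inv_eq: "inv (induced_perm k f) (k - 1) = x \<longleftrightarrow> first_return k f x = k - 1"
      using permutes_inv_eq[OF induced_perm_permutes[OF assms]] True
      by (auto simp: induced_perm_def)
    have ret_x: "first_return k f x < k" and ret_top: "first_return k f (k - 1) < k"
      using first_return_less[OF assms] True by auto
    show ?thesis
    proof (cases "first_return k f x = k - 1")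
      case ret_x_top: True
      have "first_return k f (k - 1) \<noteq> k - 1"
      proof
        assume "first_return k f (k - 1) = k - 1"
        with ret_x_top have "first_return k f x = first_return k f (k - 1)"
          by simp
        moreover have "x \<in> {..<k}" "k - 1 \<in> {..<k}"
          using True by auto
        ultimately have "x = k - 1"
          by (rule inj_onD[OF first_return_inj_on[OF assms]])
        with True show False
          by simp
      qed
      with ret_top have "first_return (k - 1) f x = first_return k f (k - 1)"
        using first_return_pred_top[OF ret_x_top] first_return_pred_below[of k f "k - 1"] True
        by simp
      then show ?thesis
        using True ret_x_top inv_eq by (simp add: contract_def induced_perm_def)
    next
      case False
      then show ?thesis
        using True inv_eq ret_x first_return_pred_below by (simp add: contract_def induced_perm_def)
    qed
  qed (simp add: contract_def induced_perm_def)
qed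

lemma contract_iter_eq_induced_perm:
  assumes "\<sigma> permutes {..<n}"
  shows "contract_iter n m \<sigma> = induced_perm (n - m) \<sigma>"
proof (induction m)
  case 0
  have "induced_perm n \<sigma> x = \<sigma> x" for x
    using assms permutes_in_image[OF assms] permutes_not_in[OF assms]
    by (simp add: induced_perm_def first_return_of_less)
  then show ?case
    by auto
next
  case (Suc m)
  have "permutation \<sigma>"
    using assms by (rule permutes_imp_permutation[OF finite_lessThan])
  moreover have "n - Suc m = n - m - 1"
    by simp
  ultimately show ?case
    using Suc by (simp only: contract_iter.simps contract_induced_perm)
qed

section \<open>Tree components of multigraphs\<close>

lemma sum_card_edges_at:
  assumes "finite V" "finite E"
  shows "(\<Sum>x\<in>V. card {e\<in>E. u e = x}) = card {e\<in>E. u e \<in> V}"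
proof -
  have "{e\<in>E. u e \<in> V} = (\<Union>x\<in>V. {e\<in>E. u e = x})"
    by auto
  also have "card \<dots> = (\<Sum>x\<in>V. card {e\<in>E. u e = x})"
    using assms by (intro card_UN_disjoint) auto
  finally show ?thesis ..
qed

lemma exists_vertex_degree_le_1:
  assumes "finite V" "finite E" "card E < card V"
  shows "\<exists>x\<in>V. card {e\<in>E. u e = x \<or> v e = x} \<le> 1"
proof (rule ccontr)
  assume "\<not> ?thesis"
  then have "(\<Sum>x\<in>V. 2) \<le> (\<Sum>x\<in>V. card {e\<in>E. u e = x \<or> v e = x})"
    by (intro sum_mono) auto
  also have "\<dots> \<le> (\<Sum>x\<in>V. card {e\<in>E. u e = x} + card {e\<in>E. v e = x})"
  proof (intro sum_mono)
    fix x
    have "{e\<in>E. u e = x \<or> v e = x} = {e\<in>E. u e = x} \<union> {e\<in>E. v e = x}"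
      by auto
    then show "card {e\<in>E. u e = x \<or> v e = x} \<le> card {e\<in>E. u e = x} + card {e\<in>E. v e = x}"
      by (simp add: card_Un_le)
  qed
  also have "\<dots> = card {e\<in>E. u e \<in> V} + card {e\<in>E. v e \<in> V}"
    using assms by (simp add: sum.distrib sum_card_edges_at)
  also have "\<dots> \<le> card E + card E"
    using assms(2) by (intro add_mono card_mono) auto
  finally show False
    using assms(3) by simp
qed

lemma tree_component_add_leaf:
  assumes "finite E" "finite W'" "x \<notin> W'"
    and at_x: "{e\<in>E. u e = x \<or> v e = x} = {e0}"
    and closed: "\<forall>e\<in>E - {e0}. u e \<in> W' \<longleftrightarrow> v e \<in> W'"
    and count: "card W' = card {e\<in>E - {e0}. u e \<in> W'} + 1"
  shows "\<exists>W\<subseteq>insert x W'. (\<forall>e\<in>E. u e \<in> W \<longleftrightarrow> v e \<in> W) \<and> card W = card {e\<in>E. u e \<in> W} + 1"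
proof -
  have "e0 \<in> E" and e0_at_x: "u e0 = x \<or> v e0 = x"
    using at_x by auto
  then have E_split: "E = insert e0 (E - {e0})"
    by auto
  have away: "u e \<noteq> x" "v e \<noteq> x" if "e \<in> E - {e0}" for e
    using at_x that by auto
  show ?thesis
  proof (cases "u e0 \<in> W' \<or> v e0 \<in> W'")
    case True
    have "{e\<in>E. u e \<in> insert x W'} = insert e0 {e\<in>E - {e0}. u e \<in> W'}"
      using e0_at_x away True \<open>x \<notin> W'\<close> by (subst E_split) auto
    moreover have "finite {e\<in>E - {e0}. u e \<in> W'}"
      using \<open>finite E\<close> by simp
    moreover have "\<forall>e\<in>E. u e \<in> insert x W' \<longleftrightarrow> v e \<in> insert x W'"
      using closed e0_at_x away True \<open>x \<notin> W'\<close> by (subst E_split) auto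
    ultimately show ?thesis
      using count \<open>finite W'\<close> \<open>x \<notin> W'\<close> by (intro exI[of _ "insert x W'"]) auto
  next
    case False
    then have "{e\<in>E. u e \<in> W'} = {e\<in>E - {e0}. u e \<in> W'}"
      by auto
    moreover have "\<forall>e\<in>E. u e \<in> W' \<longleftrightarrow> v e \<in> W'"
      using closed False by (subst E_split) auto
    ultimately show ?thesis
      using count by (intro exI[of _ W']) auto
  qed
qed

lemma exists_tree_component:
  fixes u v :: "'e \<Rightarrow> 'v"
  assumes "finite V" "finite E" "card E < card V"
  shows "\<exists>W\<subseteq>V. (\<forall>e\<in>E. u e \<in> W \<longleftrightarrow> v e \<in> W) \<and> card W = card {e\<in>E. u e \<in> W} + 1"
  using assms
proof (induction "card V" arbitrary: V E rule: less_induct)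
  case less
  obtain x where x: "x \<in> V" and deg: "card {e\<in>E. u e = x \<or> v e = x} \<le> 1"
    using exists_vertex_degree_le_1[OF less.prems] by blast
  show ?case
  proof (cases "{e\<in>E. u e = x \<or> v e = x} = {}")
    case True
    then have no_edge: "{e\<in>E. u e \<in> {x}} = {}"
      by auto
    show ?thesis
    proof (intro exI conjI)
      show "card {x} = card {e\<in>E. u e \<in> {x}} + 1"
        unfolding no_edge by simp
    qed (use x True in auto)
  next
    case False
    then have "card {e\<in>E. u e = x \<or> v e = x} \<noteq> 0"
      using less.prems(2) by simp
    with deg have "card {e\<in>E. u e = x \<or> v e = x} = 1"
      by linarith
    then obtain e0 where at_x: "{e\<in>E. u e = x \<or> v e = x} = {e0}"
      by (rule card_1_singletonE)
    then have "e0 \<in> E"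
      by auto
    then have "card (E - {e0}) < card (V - {x})"
      using less.prems x card_gt_0_iff[of E] by (auto simp: card_Diff_singleton)
    moreover have "card (V - {x}) < card V"
      using less.prems(1) x by (rule card_Diff1_less)
    ultimately obtain W' where W': "W' \<subseteq> V - {x}" "\<forall>e\<in>E - {e0}. u e \<in> W' \<longleftrightarrow> v e \<in> W'"
      "card W' = card {e\<in>E - {e0}. u e \<in> W'} + 1"
      using less.hyps[of "V - {x}" "E - {e0}"] less.prems(1,2) by blast
    have "finite W'"
      using W'(1) less.prems(1) finite_subset by blast
    then obtain W where "W \<subseteq> insert x W'" "\<forall>e\<in>E. u e \<in> W \<longleftrightarrow> v e \<in> W"
      "card W = card {e\<in>E. u e \<in> W} + 1"
      using tree_component_add_leaf[OF less.prems(2) _ _ at_x W'(2,3)] W'(1) by blast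
    moreover have "insert x W' \<subseteq> V"
      using W'(1) x by blast
    ultimately show ?thesis
      by (intro exI[of _ W]) auto
  qed
qed

section \<open>Odd orbits\<close>

lemma orbit_subset_invariant:
  assumes "g ` U \<subseteq> U" "z \<in> U"
  shows "orbit g z \<subseteq> U"
proof
  fix y assume "y \<in> orbit g z"
  then show "y \<in> U"
    by induction (use assms in auto)
qed

lemma invariant_set_has_odd_orbit:
  assumes g: "permutation g" and "finite U" "g ` U \<subseteq> U" "odd (card U)"
  shows "\<exists>z\<in>U. odd (card (orbit g z))"
proof (rule ccontr)
  assume "\<not> ?thesis"
  then have all_even: "even (card (orbit g z))" if "z \<in> U" for z
    using that by blast
  have orbits_disjoint: "pairwise disjnt (orbit g ` U)"
  proof (rule pairwiseI, clarsimp)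
    fix a b assume "orbit g a \<noteq> orbit g b"
    then show "disjnt (orbit g a) (orbit g b)"
      using orbit_cyclic_eq3[OF cyclic_on_orbit'[OF g]] unfolding disjnt_def by blast
  qed
  have "U = \<Union> (orbit g ` U)"
    using orbit_subset_invariant[OF assms(3)] permutation_self_in_orbit[OF g] by blast
  moreover have "finite Ob" if "Ob \<in> orbit g ` U" for Ob
    using that orbit_subset_invariant[OF assms(3)] assms(2) by (auto intro: finite_subset)
  ultimately have "card U = sum card (orbit g ` U)"
    using card_Union_disjoint[OF orbits_disjoint] by metis
  also have "even \<dots>"
    using all_even by (auto intro!: dvd_sum)
  finally show False
    using assms(4) by simp
qed

lemma exists_odd_nontrivial_orbit:
  assumes g: "permutation g" and "finite T" "g ` T \<subseteq> T" "odd (card {t\<in>T. g t \<noteq> t})"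
  shows "\<exists>z\<in>T. odd (card (orbit g z)) \<and> 3 \<le> card (orbit g z)
               \<and> card (orbit g z) \<le> card {t\<in>T. g t \<noteq> t}"
proof -
  define U where "U = {t\<in>T. g t \<noteq> t}"
  have "g ` U \<subseteq> U"
    using assms(3) permutation_bijective[OF g] by (auto simp: U_def bij_def inj_eq)
  moreover have "finite U"
    using assms(2) by (simp add: U_def)
  ultimately obtain z where "z \<in> U" and odd: "odd (card (orbit g z))"
    using invariant_set_has_odd_orbit[OF g] assms(4) unfolding U_def by blast
  have sub: "orbit g z \<subseteq> U"
    using orbit_subset_invariant[OF \<open>g ` U \<subseteq> U\<close> \<open>z \<in> U\<close>] .
  have "card {z, g z} \<le> card (orbit g z)"
    using permutation_self_in_orbit[OF g] orbit.base sub \<open>finite U\<close>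
    by (intro card_mono) (auto intro: finite_subset)
  moreover have "card {z, g z} = 2"
    using \<open>z \<in> U\<close> by (auto simp: U_def)
  moreover have "card (orbit g z) \<noteq> 2"
    using odd by auto
  ultimately have "3 \<le> card (orbit g z)"
    by linarith
  moreover have "card (orbit g z) \<le> card U"
    using sub \<open>finite U\<close> by (rule card_mono[rotated])
  ultimately show ?thesis
    using \<open>z \<in> U\<close> odd by (auto simp: U_def)
qed

section \<open>New agreements of the induced permutations\<close>

lemma image_last_below_preimage:
  assumes f: "f permutes {..<n}" and "k \<le> n" and W: "W \<subseteq> {..<k}"
  shows "f ` {y. y < n \<and> last_below k f y \<in> W}
           = {t. k \<le> t \<and> t < n \<and> last_below k f t \<in> W} \<union> first_return k f ` W"
proof -
  have perm: "permutation f"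
    using f by (rule permutes_imp_permutation[OF finite_lessThan])
  have f_in: "f y < n \<longleftrightarrow> y < n" for y
    using permutes_in_image[OF f] by simp
  have f_inv: "f (inv f t) = t" for t
    using permutes_inverses(1)[OF f] .
  show ?thesis
  proof (intro equalityI subsetI)
    fix t assume "t \<in> f ` {y. y < n \<and> last_below k f y \<in> W}"
    then obtain y where t: "t = f y" and "y < n" and y_W: "last_below k f y \<in> W"
      by blast
    show "t \<in> {t. k \<le> t \<and> t < n \<and> last_below k f t \<in> W} \<union> first_return k f ` W"
    proof (cases "k \<le> f y")
      case True
      then show ?thesis
        using t \<open>y < n\<close> y_W f_in last_below_step[OF perm] by auto
    next
      case False
      then have "t = first_return k f (last_below k f y)"
        using t first_return_last_below[OF perm] by simp
      with y_W show ?thesis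
        by blast
    qed
  next
    fix t assume "t \<in> {t. k \<le> t \<and> t < n \<and> last_below k f t \<in> W} \<union> first_return k f ` W"
    then have "t < n \<and> last_below k f (inv f t) \<in> W"
    proof (elim UnE)
      assume "t \<in> {t. k \<le> t \<and> t < n \<and> last_below k f t \<in> W}"
      then show ?thesis
        using last_below_step[OF perm, of k "inv f t"] f_inv by simp
    next
      assume "t \<in> first_return k f ` W"
      then obtain w where "w \<in> W" and t: "t = first_return k f w"
        by blast
      then have "w < k"
        using W by auto
      then have "t < k" "last_below k f (inv f t) = w"
        unfolding t by (simp_all add: first_return_less[OF perm] last_below_inv_first_return[OF perm])
      then show ?thesis
        using \<open>w \<in> W\<close> \<open>k \<le> n\<close> by simp
    qed
    then show "t \<in> f ` {y. y < n \<and> last_below k f y \<in> W}"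
      using f_in[of "inv f t"] by (intro image_eqI[where f = f and x = "inv f t"]) (simp_all add: f_inv)
  qed
qed

lemma image_preimage_last_below_eq:
  assumes \<sigma>: "\<sigma> permutes {..<n}" and \<tau>: "\<tau> permutes {..<n}" and "k \<le> n"
    and W: "W \<subseteq> {x. x < k \<and> first_return k \<sigma> x = first_return k \<tau> x}"
    and closed: "\<And>y. k \<le> y \<Longrightarrow> y < n \<Longrightarrow> last_below k \<sigma> y \<in> W \<longleftrightarrow> last_below k \<tau> y \<in> W"
  shows "\<sigma> ` {y. y < n \<and> last_below k \<sigma> y \<in> W} = \<tau> ` {y. y < n \<and> last_below k \<sigma> y \<in> W}"
proof -
  have W_below: "W \<subseteq> {..<k}"
    using W by auto
  have "last_below k \<sigma> y \<in> W \<longleftrightarrow> last_below k \<tau> y \<in> W" if "y < n" for y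
  proof (cases "y < k")
    case True
    then show ?thesis
      using \<sigma> \<tau> by (simp add: last_below_of_less permutes_imp_permutation[OF finite_lessThan])
  qed (use closed that in simp)
  then have same_preimage:
    "{y. y < n \<and> last_below k \<sigma> y \<in> W} = {y. y < n \<and> last_below k \<tau> y \<in> W}"
    by auto
  have "\<sigma> ` {y. y < n \<and> last_below k \<sigma> y \<in> W}
          = {t. k \<le> t \<and> t < n \<and> last_below k \<sigma> t \<in> W} \<union> first_return k \<sigma> ` W"
    by (rule image_last_below_preimage[OF \<sigma> \<open>k \<le> n\<close> W_below])
  also have "\<dots> = {t. k \<le> t \<and> t < n \<and> last_below k \<tau> t \<in> W} \<union> first_return k \<tau> ` W"
    using W closed by (intro arg_cong2[where f = "(\<union>)"] image_cong) auto
  also have "\<dots> = \<tau> ` {y. y < n \<and> last_below k \<tau> y \<in> W}"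
    by (rule image_last_below_preimage[OF \<tau> \<open>k \<le> n\<close> W_below, symmetric])
  finally show ?thesis
    by (simp only: same_preimage)
qed


lemma card_moved_preimage:
  assumes "permutation \<sigma>" "k \<le> n"
    and W: "W \<subseteq> {x. x < k \<and> \<sigma> x \<noteq> \<tau> x}"
    and count: "card W = card {y. k \<le> y \<and> y < n \<and> last_below k \<sigma> y \<in> W}
                  + card {y. k \<le> y \<and> y < n \<and> \<sigma> y = \<tau> y \<and> last_below k \<sigma> y \<in> W} + 1"
  shows "card {y. y < n \<and> last_below k \<sigma> y \<in> W \<and> \<sigma> y \<noteq> \<tau> y}
           = 2 * card {y. k \<le> y \<and> y < n \<and> last_below k \<sigma> y \<in> W} + 1"
proof -
  define D where "D = {y. k \<le> y \<and> y < n \<and> last_below k \<sigma> y \<in> W}"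
  define D_fix where "D_fix = {y. k \<le> y \<and> y < n \<and> \<sigma> y = \<tau> y \<and> last_below k \<sigma> y \<in> W}"
  have "{y. y < n \<and> last_below k \<sigma> y \<in> W \<and> \<sigma> y \<noteq> \<tau> y} = W \<union> (D - D_fix)"
  proof (intro set_eqI)
    fix y show "y \<in> {y. y < n \<and> last_below k \<sigma> y \<in> W \<and> \<sigma> y \<noteq> \<tau> y} \<longleftrightarrow> y \<in> W \<union> (D - D_fix)"
      using W \<open>k \<le> n\<close> last_below_of_less[OF assms(1), of y k]
      by (cases "y < k") (auto simp: D_def D_fix_def)
  qed
  moreover have "W \<inter> (D - D_fix) = {}" "D_fix \<subseteq> D" "finite D" "finite W"
    using W by (auto simp: D_def D_fix_def intro: finite_subset[of W "{..<k}"])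
  ultimately have "card {y. y < n \<and> last_below k \<sigma> y \<in> W \<and> \<sigma> y \<noteq> \<tau> y} = card W + (card D - card D_fix)"
    by (simp add: card_Un_disjoint card_Diff_subset finite_subset)
  also have "\<dots> = 2 * card D + 1"
    using count card_mono[OF \<open>finite D\<close> \<open>D_fix \<subseteq> D\<close>] by (simp add: D_def D_fix_def)
  finally show ?thesis
    by (simp add: D_def)
qed

(* The symbols whose \<sigma>-excursion starts in W form a set S with \<sigma> ` S = \<tau> ` S, so \<sigma>\<^sup>-\<^sup>1\<tau>
   maps \<sigma> ` S onto itself and moves an odd number of its points. *)
lemma short_odd_cycle_of_tree_component:
  assumes \<sigma>: "\<sigma> permutes {..<n}" and \<tau>: "\<tau> permutes {..<n}" and "k \<le> n"
    and W: "W \<subseteq> {x. x < k \<and> \<sigma> x \<noteq> \<tau> x \<and> first_return k \<sigma> x = first_return k \<tau> x}"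
    and closed: "\<And>y. k \<le> y \<Longrightarrow> y < n \<Longrightarrow> last_below k \<sigma> y \<in> W \<longleftrightarrow> last_below k \<tau> y \<in> W"
    and count: "card W = card {y. k \<le> y \<and> y < n \<and> last_below k \<sigma> y \<in> W}
                  + card {y. k \<le> y \<and> y < n \<and> \<sigma> y = \<tau> y \<and> last_below k \<sigma> y \<in> W} + 1"
  shows "\<exists>x<n. odd (card (orbit (\<tau> \<circ> inv \<sigma>) x)) \<and> 3 \<le> card (orbit (\<tau> \<circ> inv \<sigma>) x)
                \<and> card (orbit (\<tau> \<circ> inv \<sigma>) x) \<le> 2 * (n - k) + 1"
proof -
  define S where "S = {y. y < n \<and> last_below k \<sigma> y \<in> W}"
  define g where "g = \<tau> \<circ> inv \<sigma>"
  have perm_\<sigma>: "permutation \<sigma>" and perm_\<tau>: "permutation \<tau>"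
    using \<sigma> \<tau> by (simp_all add: permutes_imp_permutation[OF finite_lessThan])
  have inv_\<sigma>: "inv \<sigma> (\<sigma> y) = y" for y
    using permutes_inverses(2)[OF \<sigma>] .
  have "g ` \<sigma> ` S = \<tau> ` S"
    by (simp add: g_def image_comp inv_\<sigma> o_def)
  also have "\<dots> = \<sigma> ` S"
    unfolding S_def using image_preimage_last_below_eq[OF \<sigma> \<tau> \<open>k \<le> n\<close> _ closed] W by auto
  finally have invariant: "g ` \<sigma> ` S \<subseteq> \<sigma> ` S"
    by simp
  have "{t \<in> \<sigma> ` S. g t \<noteq> t} = \<sigma> ` {y. y < n \<and> last_below k \<sigma> y \<in> W \<and> \<sigma> y \<noteq> \<tau> y}"
    by (auto simp: g_def inv_\<sigma> S_def)
  then have card_moved: "card {t \<in> \<sigma> ` S. g t \<noteq> t}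
                           = 2 * card {y. k \<le> y \<and> y < n \<and> last_below k \<sigma> y \<in> W} + 1"
    using card_moved_preimage[OF perm_\<sigma> \<open>k \<le> n\<close> _ count] W permutes_inj[OF \<sigma>]
    by (auto simp: card_image inj_on_subset)
  have "{y. k \<le> y \<and> y < n \<and> last_below k \<sigma> y \<in> W} \<subseteq> {k..<n}"
    by auto
  then have "card {t \<in> \<sigma> ` S. g t \<noteq> t} \<le> 2 * (n - k) + 1"
    unfolding card_moved using card_mono[of "{k..<n}"] by fastforce
  have "permutation g"
    unfolding g_def using perm_\<sigma> perm_\<tau> by (simp add: permutation_compose permutation_inverse)
  moreover have "finite (\<sigma> ` S)"
    by (simp add: S_def)
  moreover have "odd (card {t \<in> \<sigma> ` S. g t \<noteq> t})"
    unfolding card_moved by simp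
  ultimately obtain z where "z \<in> \<sigma> ` S" "odd (card (orbit g z))" "3 \<le> card (orbit g z)"
      "card (orbit g z) \<le> card {t \<in> \<sigma> ` S. g t \<noteq> t}"
    using exists_odd_nontrivial_orbit[of g "\<sigma> ` S"] invariant by blast
  moreover have "z < n"
    using \<open>z \<in> \<sigma> ` S\<close> permutes_in_image[OF \<sigma>] by (auto simp: S_def)
  ultimately show ?thesis
    using \<open>card {t \<in> \<sigma> ` S. g t \<noteq> t} \<le> 2 * (n - k) + 1\<close> unfolding g_def
    by (intro exI[of _ z]) auto
qed


lemma card_new_agreements_le:
  assumes \<sigma>: "\<sigma> permutes {..<n}" and \<tau>: "\<tau> permutes {..<n}" and "k \<le> n"
    and no_short_odd_cycle: "\<forall>x<n. \<not> (odd (card (orbit (\<tau> \<circ> inv \<sigma>) x))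
                    \<and> 3 \<le> card (orbit (\<tau> \<circ> inv \<sigma>) x)
                    \<and> card (orbit (\<tau> \<circ> inv \<sigma>) x) \<le> 2 * (n - k) + 1)"
  shows "card {x. x < k \<and> \<sigma> x \<noteq> \<tau> x \<and> first_return k \<sigma> x = first_return k \<tau> x}
           \<le> (n - k) + card {y. k \<le> y \<and> y < n \<and> \<sigma> y = \<tau> y}"
proof (rule ccontr)
  (* The multigraph on the new agreements X: each removed symbol y is an edge from the start of
     its \<sigma>-excursion to the start of its \<tau>-excursion, and a second time if \<sigma> y = \<tau> y. *)
  define X where "X = {x. x < k \<and> \<sigma> x \<noteq> \<tau> x \<and> first_return k \<sigma> x = first_return k \<tau> x}"
  define D where "D = {k..<n}"
  define D_fix where "D_fix = {y. k \<le> y \<and> y < n \<and> \<sigma> y = \<tau> y}"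
  define u where "u = case_sum (last_below k \<sigma>) (last_below k \<sigma>)"
  define v where "v = case_sum (last_below k \<tau>) (last_below k \<tau>)"
  assume "\<not> ?thesis"
  then have "card (D <+> D_fix) < card X"
    by (simp add: card_Plus X_def D_def D_fix_def)
  then obtain W where "W \<subseteq> X" and closed: "\<forall>e \<in> D <+> D_fix. u e \<in> W \<longleftrightarrow> v e \<in> W"
    and count: "card W = card {e \<in> D <+> D_fix. u e \<in> W} + 1"
    using exists_tree_component[of X "D <+> D_fix" u v] by (auto simp: X_def D_def D_fix_def)
  have "{e \<in> D <+> D_fix. u e \<in> W} = {y\<in>D. last_below k \<sigma> y \<in> W} <+> {y\<in>D_fix. last_below k \<sigma> y \<in> W}"
  proof (intro set_eqI)
    fix e show "e \<in> {e \<in> D <+> D_fix. u e \<in> W}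
        \<longleftrightarrow> e \<in> {y\<in>D. last_below k \<sigma> y \<in> W} <+> {y\<in>D_fix. last_below k \<sigma> y \<in> W}"
      by (cases e) (auto simp: u_def)
  qed
  then have count': "card W = card {y. k \<le> y \<and> y < n \<and> last_below k \<sigma> y \<in> W}
                  + card {y. k \<le> y \<and> y < n \<and> \<sigma> y = \<tau> y \<and> last_below k \<sigma> y \<in> W} + 1"
    using count by (simp add: card_Plus D_def D_fix_def conj_commute conj_left_commute)
  have closed': "last_below k \<sigma> y \<in> W \<longleftrightarrow> last_below k \<tau> y \<in> W" if "k \<le> y" "y < n" for y
    using closed[rule_format, OF InlI[of y D D_fix]] that by (simp add: u_def v_def D_def)
  have "W \<subseteq> {x. x < k \<and> \<sigma> x \<noteq> \<tau> x \<and> first_return k \<sigma> x = first_return k \<tau> x}"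
    using \<open>W \<subseteq> X\<close> by (simp add: X_def)
  with no_short_odd_cycle show False
    using short_odd_cycle_of_tree_component[OF \<sigma> \<tau> \<open>k \<le> n\<close> _ closed' count'] by blast
qed

lemma hamming_add_card_agree: "hamming n f g + card {x. x < n \<and> f x = g x} = n"
proof -
  have "{x. x < n \<and> f x \<noteq> g x} \<union> {x. x < n \<and> f x = g x} = {..<n}"
    by auto
  then show ?thesis
    unfolding hamming_def by (subst card_Un_disjoint[symmetric]) auto
qed

lemma hamming_le_hamming_induced_perm:
  assumes \<sigma>: "\<sigma> permutes {..<n}" and \<tau>: "\<tau> permutes {..<n}" and "k \<le> n"
    and no_short_odd_cycle: "\<forall>x<n. \<not> (odd (card (orbit (\<tau> \<circ> inv \<sigma>) x))
                    \<and> 3 \<le> card (orbit (\<tau> \<circ> inv \<sigma>) x)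
                    \<and> card (orbit (\<tau> \<circ> inv \<sigma>) x) \<le> 2 * (n - k) + 1)"
  shows "hamming n \<sigma> \<tau> \<le> hamming k (induced_perm k \<sigma>) (induced_perm k \<tau>) + 2 * (n - k)"
proof -
  define agree_below where "agree_below = {x. x < k \<and> \<sigma> x = \<tau> x}"
  define agree_above where "agree_above = {y. k \<le> y \<and> y < n \<and> \<sigma> y = \<tau> y}"
  define new_agree where
    "new_agree = {x. x < k \<and> \<sigma> x \<noteq> \<tau> x \<and> first_return k \<sigma> x = first_return k \<tau> x}"
  have "{x. x < k \<and> induced_perm k \<sigma> x = induced_perm k \<tau> x} \<subseteq> agree_below \<union> new_agree"
    by (auto simp: induced_perm_def agree_below_def new_agree_def)
  moreover have "finite (agree_below \<union> new_agree)"
    by (simp add: agree_below_def new_agree_def)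
  ultimately have "card {x. x < k \<and> induced_perm k \<sigma> x = induced_perm k \<tau> x}
                     \<le> card (agree_below \<union> new_agree)"
    by (simp add: card_mono)
  also have "\<dots> \<le> card agree_below + card new_agree"
    by (rule card_Un_le)
  also have "\<dots> \<le> card agree_below + card agree_above + (n - k)"
    using card_new_agreements_le[OF assms] by (simp add: new_agree_def agree_above_def)
  also have "card agree_below + card agree_above = card {x. x < n \<and> \<sigma> x = \<tau> x}"
    using \<open>k \<le> n\<close>
    by (subst card_Un_disjoint[symmetric]) (auto simp: agree_below_def agree_above_def intro!: arg_cong[where f = card])
  finally show ?thesis
    using hamming_add_card_agree[of n \<sigma> \<tau>] hamming_add_card_agree[of k "induced_perm k \<sigma>" "induced_perm k \<tau>"]
      \<open>k \<le> n\<close> by linarith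
qed

theorem theorem5p2:
  fixes n m d :: nat and \<sigma> \<tau> :: "nat \<Rightarrow> nat"
  assumes "n \<ge> 2"
    and "\<sigma> permutes {..<n}" and "\<tau> permutes {..<n}"
    and "hamming n \<sigma> \<tau> = d"
    and "1 \<le> m" and "m \<le> n - 1"
    and "\<forall>x<n. \<not> (odd (card (orbit (\<tau> \<circ> inv \<sigma>) x))
                    \<and> 3 \<le> card (orbit (\<tau> \<circ> inv \<sigma>) x)
                    \<and> card (orbit (\<tau> \<circ> inv \<sigma>) x) \<le> 2 * m + 1)"
  shows "int (hamming (n - m) (contract_iter n m \<sigma>) (contract_iter n m \<tau>)) \<ge> int d - 2 * int m"
proof -
  have "n - (n - m) = m"
    using assms(6) by simp
  then have "hamming n \<sigma> \<tau> \<le> hamming (n - m) (induced_perm (n - m) \<sigma>) (induced_perm (n - m) \<tau>) + 2 * m"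
    using hamming_le_hamming_induced_perm[of \<sigma> n \<tau> "n - m"] assms(2,3,7) by simp
  then show ?thesis
    using assms(4) contract_iter_eq_induced_perm[OF assms(2)] contract_iter_eq_induced_perm[OF assms(3)]
    by simp
qed

end
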